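(* Let $\Sigma=(\sigma_0,\sigma_\infty,\sigma_1,\tau)$ be a special admissible 4-tuple in $S_{2n}^4$ such that $\sigma_1\tau$ contains a 3-cycle $(2n-h,h,k)$. Then the conjugacy class of $\Sigma$ contains exactly three special admissible 4-tuples. Consequently, the number of conjugacy classes of admissible 4-tuples for which $\sigma_1\tau$ is a product of $n-3$ disjoint transpositions and a 3-cycle equals $\frac{(n-1)(n-2)}{2}$.
   Context: Permutation products are read left to right. An admissible 4-tuple is $(\sigma_0,\sigma_\infty,\sigma_1,\tau)\in S_{2n}^4$ with $\sigma_0$ a product of $n$ disjoint transpositions, $\sigma_\infty$ a $2n$-cycle, $\sigma_1$ a product of $n-2$ disjoint transpositions, $\tau$ a transposition, and $\sigma_0\sigma_\infty\sigma_1\tau=\mathrm{id}$ (these are, up to conjugation, the monodromy tuples of $A^2$ for Pell–Abel solutions of degree $n$ with $\deg D=4$ and branching over $0,1,\infty$ and one further point). It is special if $\sigma_\infty=(2n,2n-1,\dots,1)$ and $\sigma_1(2n)=\tau(2n)=2n$. Conjugacy means simultaneous conjugation by some $\gamma\in S_{2n}$. *)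

theory Defs
  imports "HOL-Combinatorics.Permutations" "HOL-Combinatorics.Transposition"
begin

text \<open>Permutations of S_{2n} are functions nat => nat permuting {1..2n}.
  Products are read left to right: the product sigma rho (first sigma, then rho)
  is the function rho o sigma.\<close>

definition pts :: "nat \<Rightarrow> nat set" where
  "pts n = {1..2*n}"

definition moved :: "(nat \<Rightarrow> nat) \<Rightarrow> nat set \<Rightarrow> nat set" where
  "moved \<sigma> S = {x \<in> S. \<sigma> x \<noteq> x}"

definition disj_transp :: "nat set \<Rightarrow> nat \<Rightarrow> (nat \<Rightarrow> nat) \<Rightarrow> bool" where
  "disj_transp S m \<sigma> \<longleftrightarrow> \<sigma> permutes S \<and> (\<forall>x. \<sigma> (\<sigma> x) = x) \<and> card (moved \<sigma> S) = 2 * m"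

definition full_cycle :: "nat set \<Rightarrow> (nat \<Rightarrow> nat) \<Rightarrow> bool" where
  "full_cycle S \<sigma> \<longleftrightarrow> \<sigma> permutes S \<and> (\<forall>x\<in>S. S = {(\<sigma> ^^ k) x | k. True})"

definition is_transp :: "nat set \<Rightarrow> (nat \<Rightarrow> nat) \<Rightarrow> bool" where
  "is_transp S \<tau> \<longleftrightarrow> (\<exists>a\<in>S. \<exists>b\<in>S. a \<noteq> b \<and> \<tau> = transpose a b)"

definition has_cycle3 :: "(nat \<Rightarrow> nat) \<Rightarrow> nat \<Rightarrow> nat \<Rightarrow> nat \<Rightarrow> bool" where
  "has_cycle3 \<sigma> a b c \<longleftrightarrow> distinct [a, b, c] \<and> \<sigma> a = b \<and> \<sigma> b = c \<and> \<sigma> c = a"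

definition transp_and_3cycle :: "nat set \<Rightarrow> nat \<Rightarrow> (nat \<Rightarrow> nat) \<Rightarrow> bool" where
  "transp_and_3cycle S m \<sigma> \<longleftrightarrow> \<sigma> permutes S \<and>
     (\<exists>a b c. has_cycle3 \<sigma> a b c \<and> (\<forall>x. x \<notin> {a, b, c} \<longrightarrow> \<sigma> (\<sigma> x) = x)) \<and>
     card (moved \<sigma> S) = 2 * m + 3"

type_synonym tuple4 = "(nat \<Rightarrow> nat) \<times> (nat \<Rightarrow> nat) \<times> (nat \<Rightarrow> nat) \<times> (nat \<Rightarrow> nat)"

definition admissible :: "nat \<Rightarrow> tuple4 \<Rightarrow> bool" where
  "admissible n T \<longleftrightarrow> (case T of (s0, sinf, s1, t) \<Rightarrow>
     disj_transp (pts n) n s0 \<and> full_cycle (pts n) sinf \<and>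
     disj_transp (pts n) (n - 2) s1 \<and> is_transp (pts n) t \<and>
     t \<circ> s1 \<circ> sinf \<circ> s0 = id)"

definition sigma_inf_std :: "nat \<Rightarrow> nat \<Rightarrow> nat" where
  "sigma_inf_std n x = (if x \<in> pts n then (if x = 1 then 2 * n else x - 1) else x)"

definition special :: "nat \<Rightarrow> tuple4 \<Rightarrow> bool" where
  "special n T \<longleftrightarrow> admissible n T \<and> (case T of (s0, sinf, s1, t) \<Rightarrow>
     sinf = sigma_inf_std n \<and> s1 (2 * n) = 2 * n \<and> t (2 * n) = 2 * n)"

definition conj4 :: "(nat \<Rightarrow> nat) \<Rightarrow> tuple4 \<Rightarrow> tuple4" where
  "conj4 g T = (case T of (s0, sinf, s1, t) \<Rightarrow>
     (g \<circ> s0 \<circ> inv g, g \<circ> sinf \<circ> inv g, g \<circ> s1 \<circ> inv g, g \<circ> t \<circ> inv g))"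

definition conj_class :: "nat \<Rightarrow> tuple4 \<Rightarrow> tuple4 set" where
  "conj_class n T = {T'. \<exists>g. g permutes pts n \<and> T' = conj4 g T}"

end

(*
  Conjugating so that \<sigma>\<^sub>\<infinity> becomes the standard cycle, the relation \<sigma>\<^sub>0\<sigma>\<^sub>\<infinity>\<sigma>\<^sub>1\<tau> = id reads
  \<sigma>\<^sub>1\<tau> = \<sigma>\<^sub>0\<sigma>\<^sub>\<infinity>\<^sup>-\<^sup>1, so a tuple is determined by \<sigma>\<^sub>0 and \<tau>.  If \<sigma>\<^sub>1\<tau> is an involution apart from
  one 3-cycle, and the conjugation also sends a suitable point of that 3-cycle to 2n, then
  the fixed-point-free involution \<sigma>\<^sub>0 is forced, chord by chord, to reverse three consecutive blocks
  [1,2a], [2a+1,2a+2b], [2a+2b+1,2n], and \<tau> swaps 2a and 2a+2b.  Distinct (a,b) give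
  non-conjugate tuples, so the classes are counted by the pairs a,b \<ge> 1 with a+b < n.

  For a special tuple, the conjugators preserving \<sigma>\<^sub>\<infinity> are its powers, and such a conjugate is
  special exactly when the power moves a common fixed point of \<sigma>\<^sub>1 and \<tau> to 2n.  A 3-cycle in
  \<sigma>\<^sub>1\<tau> forces exactly one of the two points of \<tau> to be fixed by \<sigma>\<^sub>1, which leaves three of
  the four fixed points of \<sigma>\<^sub>1.
*)

theory Submission
  imports Defs "HOL-Combinatorics.Orbits" "HOL-Combinatorics.Cycles"
begin

lemma conj_comp:
  assumes "g permutes S"
  shows "(g \<circ> s \<circ> inv g) \<circ> (g \<circ> r \<circ> inv g) = g \<circ> (s \<circ> r) \<circ> inv g"
  using assms by (auto simp: fun_eq_iff permutes_inverses)

lemma conj_funpow: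
  assumes "g permutes S"
  shows "(g \<circ> s \<circ> inv g) ^^ k = g \<circ> (s ^^ k) \<circ> inv g"
proof (induction k)
  case 0
  then show ?case using assms by (simp add: permutes_inv_o)
next
  case (Suc k)
  have "(g \<circ> s \<circ> inv g) ^^ Suc k = (g \<circ> s \<circ> inv g) \<circ> (g \<circ> (s ^^ k) \<circ> inv g)"
    by (simp only: funpow.simps Suc.IH)
  also have "\<dots> = g \<circ> (s ^^ Suc k) \<circ> inv g" by (simp only: conj_comp[OF assms] funpow.simps)
  finally show ?case .
qed

lemma conj_permutes:
  assumes "g permutes S" "s permutes S"
  shows "(g \<circ> s \<circ> inv g) permutes S"
  using assms by (meson permutes_compose permutes_inv)

lemma conj_eq_self_iff:
  assumes "g permutes S"
  shows "g \<circ> s \<circ> inv g = s \<longleftrightarrow> g \<circ> s = s \<circ> g"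
proof
  have "(g \<circ> s \<circ> inv g) \<circ> g = g \<circ> s" using assms by (simp add: comp_assoc permutes_inv_o)
  then show "g \<circ> s \<circ> inv g = s \<Longrightarrow> g \<circ> s = s \<circ> g" by simp
qed (use assms in \<open>simp add: comp_assoc permutes_inv_o\<close>)

lemma moved_conj:
  assumes "g permutes S"
  shows "moved (g \<circ> s \<circ> inv g) S = g ` moved s S"
proof (intro set_eqI iffI)
  fix y assume "y \<in> moved (g \<circ> s \<circ> inv g) S"
  then show "y \<in> g ` moved s S"
    using assms by (auto simp: moved_def permutes_inverses permutes_in_image permutes_inv
        intro!: image_eqI[where x="inv g y"])
qed (use assms in \<open>auto simp: moved_def permutes_inverses permutes_in_image inj_eq permutes_inj\<close>)

lemma disj_transp_conj:
  assumes "g permutes S" "disj_transp S m s"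
  shows "disj_transp S m (g \<circ> s \<circ> inv g)"
proof -
  have "card (moved (g \<circ> s \<circ> inv g) S) = card (moved s S)"
    using assms(1) by (simp add: moved_conj card_image permutes_inj_on)
  with assms show ?thesis
    by (auto simp: disj_transp_def conj_permutes permutes_inverses)
qed

lemma full_cycle_conj:
  assumes "g permutes S" "full_cycle S s"
  shows "full_cycle S (g \<circ> s \<circ> inv g)"
  unfolding full_cycle_def
proof (intro conjI ballI)
  show "(g \<circ> s \<circ> inv g) permutes S" using assms by (simp add: conj_permutes full_cycle_def)
  fix x assume "x \<in> S"
  then have "inv g x \<in> S" using assms(1) by (simp add: permutes_in_image permutes_inv)
  then have "S = {(s ^^ k) (inv g x) | k. True}" using assms(2) by (simp add: full_cycle_def)
  then have "g ` S = {((g \<circ> s \<circ> inv g) ^^ k) x | k. True}"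
    by (auto simp: conj_funpow[OF assms(1)])
  then show "S = {((g \<circ> s \<circ> inv g) ^^ k) x | k. True}" using permutes_image[OF assms(1)] by simp
qed

lemma conj_transpose:
  assumes "g permutes S"
  shows "g \<circ> transpose a b \<circ> inv g = transpose (g a) (g b)"
proof
  fix y
  obtain x where y: "y = g x" using assms by (metis permutes_inverses(1))
  show "(g \<circ> transpose a b \<circ> inv g) y = transpose (g a) (g b) y"
    using assms by (auto simp: y transpose_def permutes_inverses inj_eq permutes_inj)
qed

lemma is_transp_conj:
  assumes "g permutes S" "is_transp S t"
  shows "is_transp S (g \<circ> t \<circ> inv g)"
  using assms unfolding is_transp_def
  by (metis conj_transpose permutes_in_image permutes_inj inj_eq)

lemma admissible_conj4:
  assumes "g permutes pts n" "admissible n T"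
  shows "admissible n (conj4 g T)"
proof -
  obtain s0 si s1 t where T: "T = (s0, si, s1, t)" by (cases T)
  have "(g \<circ> t \<circ> inv g) \<circ> (g \<circ> s1 \<circ> inv g) \<circ> (g \<circ> si \<circ> inv g) \<circ> (g \<circ> s0 \<circ> inv g)
      = g \<circ> (t \<circ> s1 \<circ> si \<circ> s0) \<circ> inv g"
    using assms(1) by (simp add: fun_eq_iff permutes_inverses)
  also have "\<dots> = id" using assms by (simp add: T admissible_def permutes_inv_o)
  finally show ?thesis using assms T unfolding admissible_def conj4_def
    by (auto intro: disj_transp_conj full_cycle_conj is_transp_conj)
qed

lemma conj4_comp:
  assumes "g permutes S" "h permutes S"
  shows "conj4 g (conj4 h T) = conj4 (g \<circ> h) T"
proof -
  have "inv (g \<circ> h) = inv h \<circ> inv g" using assms by (simp add: o_inv_distrib permutes_bij)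
  then show ?thesis by (cases T) (simp add: conj4_def comp_assoc)
qed

lemma self_in_conj_class: "T \<in> conj_class n T"
  by (cases T) (auto simp: conj_class_def conj4_def intro!: exI[of _ id])

lemma conj_class_conj4:
  assumes "g permutes pts n"
  shows "conj_class n (conj4 g T) = conj_class n T"
proof (intro set_eqI iffI)
  fix T' assume "T' \<in> conj_class n T"
  then obtain h where h: "h permutes pts n" "T' = conj4 h T" by (auto simp: conj_class_def)
  have "conj4 (h \<circ> inv g) (conj4 g T) = conj4 (h \<circ> inv g \<circ> g) T"
    using assms h by (meson conj4_comp permutes_inv permutes_compose)
  also have "\<dots> = T'" using h assms by (simp add: comp_assoc permutes_inv_o)
  finally show "T' \<in> conj_class n (conj4 g T)"
    using assms h by (auto simp: conj_class_def intro!: exI[of _ "h \<circ> inv g"] permutes_compose permutes_inv)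
qed (use assms in \<open>auto simp: conj_class_def conj4_comp intro: permutes_compose\<close>)

lemma full_cycle_enum:
  assumes "full_cycle S s" "finite S" "z \<in> S"
  shows "bij_betw (\<lambda>k. (s ^^ k) z) {0..<card S} S" "(s ^^ card S) z = z"
proof -
  have "permutation s" using assms by (auto simp: permutation_permutes full_cycle_def)
  then have orb: "orbit s z = S" using assms by (simp add: orbit_altdef_permutation full_cycle_def)
  have z: "z \<in> orbit s z" by (simp add: orb assms)
  have "S = (\<lambda>k. (s ^^ k) z) ` {0..<funpow_dist1 s z z}"
    using orbit_conv_funpow_dist1[OF z] orb by simp
  moreover have "inj_on (\<lambda>k. (s ^^ k) z) {0..<funpow_dist1 s z z}"
    by (rule inj_on_funpow_dist1[OF z])
  ultimately have bij: "bij_betw (\<lambda>k. (s ^^ k) z) {0..<funpow_dist1 s z z} S"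
    by (simp add: bij_betw_def)
  then have "card S = funpow_dist1 s z z" using bij_betw_same_card[OF bij] by simp
  then show "bij_betw (\<lambda>k. (s ^^ k) z) {0..<card S} S" "(s ^^ card S) z = z"
    using bij funpow_dist1_prop[OF z] by simp_all
qed

lemma funpow_commute_apply:
  assumes "g \<circ> s = s \<circ> g"
  shows "g ((s ^^ k) x) = (s ^^ k) (g x)"
  using assms by (induction k) (auto simp: fun_eq_iff)

lemma full_cycle_commuting_eqI:
  assumes "full_cycle S s" "g permutes S" "h permutes S"
    and "g \<circ> s = s \<circ> g" "h \<circ> s = s \<circ> h" and "y \<in> S" "g y = h y"
  shows "g = h"
proof
  fix x show "g x = h x"
  proof (cases "x \<in> S")
    case True
    then obtain k where "x = (s ^^ k) y" using assms(1,6) unfolding full_cycle_def by blast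
    then show ?thesis using funpow_commute_apply[OF assms(4)] funpow_commute_apply[OF assms(5)] assms(7)
      by simp
  qed (use assms(2,3) in \<open>simp add: permutes_not_in\<close>)
qed

lemma full_cycles_conjugate:
  assumes s: "full_cycle S s" and s': "full_cycle S s'" and "finite S" "w \<in> S" "w' \<in> S"
  obtains g where "g permutes S" "g \<circ> s = s' \<circ> g" "g w = w'"
proof -
  define N where "N = card S"
  define f where "f k = (s ^^ k) w" for k
  define f' where "f' k = (s' ^^ k) w'" for k
  have bf: "bij_betw f {0..<N} S" and fN: "f N = w"
    using full_cycle_enum[OF s assms(3,4), folded f_def N_def] by simp_all
  have bf': "bij_betw f' {0..<N} S" and fN': "f' N = w'"
    using full_cycle_enum[OF s' assms(3,5), folded f'_def N_def] by simp_all
  define g where "g v = (if v \<in> S then f' (the_inv_into {0..<N} f v) else v)" for v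
  have N: "0 < N" using assms(3,4) by (auto simp: N_def card_gt_0_iff)
  have gf: "g (f k) = f' k" for k
  proof -
    have "f k = f (k mod N)" "f' k = f' (k mod N)"
      using fN fN' by (simp_all add: f_def f'_def funpow_mod_eq)
    moreover have "the_inv_into {0..<N} f (f (k mod N)) = k mod N"
      using bf N by (simp add: bij_betw_def the_inv_into_f_f)
    ultimately show ?thesis using bf N by (auto simp: g_def bij_betw_def)
  qed
  have "bij_betw (f' \<circ> the_inv_into {0..<N} f) S S"
    by (rule bij_betw_trans[OF bij_betw_the_inv_into[OF bf] bf'])
  then have "bij_betw g S S" by (rule bij_betw_cong[THEN iffD1, rotated]) (simp add: g_def)
  then have "g permutes S" by (rule bij_imp_permutes) (simp add: g_def)
  moreover have "g \<circ> s = s' \<circ> g"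
  proof
    fix v show "(g \<circ> s) v = (s' \<circ> g) v"
    proof (cases "v \<in> S")
      case True
      then obtain k where "v = f k" using bf by (auto simp: bij_betw_def)
      then show ?thesis using gf[of k] gf[of "Suc k"] by (simp add: f_def f'_def)
    next
      case False
      then have "s v = v" "s' v = v" using s s' by (meson full_cycle_def permutes_not_in)+
      then show ?thesis using False by (simp add: g_def)
    qed
  qed
  moreover have "g w = w'" using gf[of 0] by (simp add: f_def f'_def)
  ultimately show ?thesis using that by blast
qed

lemma has_cycle3_not_invol:
  assumes "has_cycle3 \<rho> p q r" "x \<in> {p, q, r}"
  shows "\<rho> (\<rho> x) \<noteq> x"
  using assms by (auto simp: has_cycle3_def)

lemma transpose_comp_3cycle:
  assumes cyc: "has_cycle3 \<rho> p q r" and invol: "\<forall>x. x \<notin> {p, q, r} \<longrightarrow> \<rho> (\<rho> x) = x"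
  shows "(transpose p q \<circ> \<rho>) ((transpose p q \<circ> \<rho>) x) = x"
    and "moved (transpose p q \<circ> \<rho>) S = moved \<rho> S - {p}"
proof -
  define \<sigma> where "\<sigma> = transpose p q \<circ> \<rho>"
  have d: "p \<noteq> q" "q \<noteq> r" "p \<noteq> r" and \<rho>: "\<rho> p = q" "\<rho> q = r" "\<rho> r = p"
    using cyc by (simp_all add: has_cycle3_def)
  have \<sigma>: "\<sigma> p = p" "\<sigma> q = r" "\<sigma> r = q"
    using d \<rho> by (simp_all add: \<sigma>_def)
  have out: "\<sigma> v = \<rho> v" "\<rho> v \<notin> {p, q, r}" if "v \<notin> {p, q, r}" for v
  proof -
    have "\<rho> (\<rho> v) = v" using invol that by blast
    then show "\<rho> v \<notin> {p, q, r}" using that \<rho> by auto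
    then show "\<sigma> v = \<rho> v" by (simp add: \<sigma>_def)
  qed
  show "\<sigma> (\<sigma> x) = x"
  proof (cases "x \<in> {p, q, r}")
    case True then show ?thesis using \<sigma> by auto
  next
    case False then show ?thesis using out[OF False] out(1)[of "\<rho> x"] invol by simp
  qed
  show "moved \<sigma> S = moved \<rho> S - {p}"
  proof (intro set_eqI)
    fix v show "v \<in> moved \<sigma> S \<longleftrightarrow> v \<in> moved \<rho> S - {p}"
      using d \<rho> \<sigma> out(1)[of v] by (cases "v \<in> {p, q, r}") (auto simp: moved_def)
  qed
qed

text \<open>Otherwise \<open>transpose x y \<circ> s\<close> is an involution, or it has the 4-cycle \<open>(x, s x, y, s y)\<close>
  and is an involution elsewhere; either way it has no 3-cycle.\<close>

lemma transpose_comp_invol_3cycle: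
  assumes inv: "\<forall>v. s (s v) = v" and xy: "x \<noteq> y"
    and cyc: "has_cycle3 (transpose x y \<circ> s) p q r"
  shows "(s x = x \<and> s y \<noteq> y) \<or> (s y = y \<and> s x \<noteq> x)"
proof (rule ccontr)
  define \<rho> where "\<rho> = transpose x y \<circ> s"
  have \<rho>: "\<rho> p = q" "\<rho> q = r" "\<rho> r = p" "p \<noteq> q" "q \<noteq> r" "p \<noteq> r"
    using cyc by (auto simp: has_cycle3_def \<rho>_def)
  assume nt: "\<not> ((s x = x \<and> s y \<noteq> y) \<or> (s y = y \<and> s x \<noteq> x))"
  consider "s x = x" "s y = y" | "s x = y" | "s x \<noteq> x" "s y \<noteq> y" "s x \<noteq> y"
    using nt by blast
  then show False
  proof cases
    case 1
    have "\<rho> (\<rho> v) = v" for v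
    proof (cases "v = x \<or> v = y")
      case True then show ?thesis using 1 xy by (auto simp: \<rho>_def)
    next
      case False
      then have "s v \<noteq> x" "s v \<noteq> y" using 1 inv by metis+
      then show ?thesis using False inv by (simp add: \<rho>_def)
    qed
    then show False using \<rho> by metis
  next
    case 2
    then have sy: "s y = x" using inv by metis
    have "\<rho> (\<rho> v) = v" for v
    proof (cases "v = x \<or> v = y")
      case True then show ?thesis using 2 sy xy by (auto simp: \<rho>_def)
    next
      case False
      then have "s v \<noteq> x" "s v \<noteq> y" using 2 sy inv by metis+
      then show ?thesis using False inv by (simp add: \<rho>_def)
    qed
    then show False using \<rho> by metis
  next
    case 3
    define u where "u = s x"
    define w where "w = s y"
    have uw: "u \<noteq> x" "u \<noteq> y" "w \<noteq> x" "w \<noteq> y" "u \<noteq> w" "s u = x" "s w = y"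
      using 3 inv xy unfolding u_def w_def by metis+
    have \<rho>4: "\<rho> x = u" "\<rho> u = y" "\<rho> y = w" "\<rho> w = x"
      using uw xy by (auto simp: \<rho>_def u_def w_def)
    have period3: "\<rho> (\<rho> (\<rho> v)) = v \<Longrightarrow> \<rho> v = v" for v
    proof (cases "v \<in> {x, u, y, w}")
      case True
      then show "\<rho> (\<rho> (\<rho> v)) = v \<Longrightarrow> \<rho> v = v" using \<rho>4 uw xy by auto
    next
      case False
      have "s v \<noteq> x" using False inv u_def by (metis insertCI)
      moreover have "s v \<noteq> y" using False inv w_def by (metis insertCI)
      moreover have "s v \<noteq> u" using False inv u_def by (metis insertCI)
      moreover have "s v \<noteq> w" using False inv w_def by (metis insertCI)
      ultimately have "s v \<notin> {x, u, y, w}" by simp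
      then have "\<rho> v = s v" "\<rho> (s v) = v" using False inv by (auto simp: \<rho>_def)
      then show "\<rho> (\<rho> (\<rho> v)) = v \<Longrightarrow> \<rho> v = v" by simp
    qed
    then show False using \<rho> by metis
  qed
qed

lemma transpose_comp_invol_3cycle_points:
  assumes inv: "\<forall>v. s (s v) = v" and t: "is_transp S t" and cyc: "has_cycle3 (t \<circ> s) p q r"
  obtains x y where "x \<in> S" "y \<in> S" "x \<noteq> y" "t = transpose x y" "s x = x" "s y \<noteq> y"
    "has_cycle3 (t \<circ> s) (s y) x y"
proof -
  obtain x y where xy: "x \<in> S" "y \<in> S" "x \<noteq> y" "t = transpose x y" "s x = x" "s y \<noteq> y"
  proof -
    obtain x y where xy: "x \<in> S" "y \<in> S" "x \<noteq> y" "t = transpose x y"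
      using t by (auto simp: is_transp_def)
    then have "s x = x \<and> s y \<noteq> y \<or> s y = y \<and> s x \<noteq> x"
      using transpose_comp_invol_3cycle[OF inv xy(3)] cyc by simp
    then show ?thesis using that xy that[of y x] by (auto simp: transpose_commute)
  qed
  moreover have "s y \<noteq> x" "s (s y) = y" using xy inv by metis+
  ultimately have "has_cycle3 (t \<circ> s) (s y) x y" by (auto simp: has_cycle3_def)
  with xy that show ?thesis by blast
qed

lemma has_cycle3_conj:
  assumes g: "g permutes S" and cyc: "has_cycle3 \<rho> p q r"
    and invol: "\<forall>v. v \<notin> {p, q, r} \<longrightarrow> \<rho> (\<rho> v) = v"
  shows "has_cycle3 (g \<circ> \<rho> \<circ> inv g) (g p) (g q) (g r)"
    and "\<forall>v. v \<notin> {g p, g q, g r} \<longrightarrow> (g \<circ> \<rho> \<circ> inv g) ((g \<circ> \<rho> \<circ> inv g) v) = v"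
proof -
  have inj: "inj g" using g by (rule permutes_inj)
  show "has_cycle3 (g \<circ> \<rho> \<circ> inv g) (g p) (g q) (g r)"
    using cyc g inj by (simp add: has_cycle3_def permutes_inverses inj_eq)
  show "\<forall>v. v \<notin> {g p, g q, g r} \<longrightarrow> (g \<circ> \<rho> \<circ> inv g) ((g \<circ> \<rho> \<circ> inv g) v) = v"
  proof (intro allI impI)
    fix v assume "v \<notin> {g p, g q, g r}"
    then have "inv g v \<notin> {p, q, r}" using g by (auto simp: permutes_inverses)
    then show "(g \<circ> \<rho> \<circ> inv g) ((g \<circ> \<rho> \<circ> inv g) v) = v"
      using invol g by (simp add: permutes_inverses)
  qed
qed

lemma has_cycle3_unique:
  assumes "has_cycle3 \<rho> a b c" "has_cycle3 \<rho> p q r" "\<forall>v. v \<notin> {a, b, c} \<longrightarrow> \<rho> (\<rho> v) = v"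
  shows "{p, q, r} = {a, b, c}"
proof -
  have "{p, q, r} \<subseteq> {a, b, c}" using assms(3) has_cycle3_not_invol[OF assms(2)] by blast
  moreover have "card {p, q, r} = 3" using assms(2) by (simp add: has_cycle3_def)
  moreover have "card {a, b, c} \<le> 3" by (simp add: card_insert_le_m1)
  ultimately show ?thesis by (metis card_seteq finite.emptyI finite_insert)
qed

definition sigma_inf_inv :: "nat \<Rightarrow> nat \<Rightarrow> nat" where
  "sigma_inf_inv n x = (if x \<in> pts n then (if x = 2 * n then 1 else x + 1) else x)"

lemma sigma_inf_std_inv [simp]: "sigma_inf_std n (sigma_inf_inv n x) = x"
  by (auto simp: sigma_inf_std_def sigma_inf_inv_def pts_def)

lemma sigma_inf_inv_std [simp]: "sigma_inf_inv n (sigma_inf_std n x) = x"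
  by (auto simp: sigma_inf_std_def sigma_inf_inv_def pts_def)

lemma card_pts [simp]: "card (pts n) = 2 * n"
  by (simp add: pts_def)

lemma finite_pts [simp]: "finite (pts n)"
  by (simp add: pts_def)

lemma sigma_inf_std_permutes: "sigma_inf_std n permutes pts n"
proof (rule inj_imp_permutes)
  show "inj_on (sigma_inf_std n) (pts n)" by (metis sigma_inf_inv_std inj_onI)
qed (auto simp: sigma_inf_std_def pts_def)

lemma sigma_inf_inv_permutes: "sigma_inf_inv n permutes pts n"
proof (rule inj_imp_permutes)
  show "inj_on (sigma_inf_inv n) (pts n)" by (metis sigma_inf_std_inv inj_onI)
qed (auto simp: sigma_inf_inv_def pts_def)

lemma sigma_inf_std_funpow_less:
  assumes "x \<in> pts n" "k < x"
  shows "(sigma_inf_std n ^^ k) x = x - k"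
  using assms by (induction k) (auto simp: sigma_inf_std_def pts_def)

lemma sigma_inf_std_funpow_self:
  assumes "x \<in> pts n"
  shows "(sigma_inf_std n ^^ x) x = 2 * n"
proof -
  have "x = Suc (x - 1)" using assms by (simp add: pts_def)
  then have "(sigma_inf_std n ^^ x) x = sigma_inf_std n ((sigma_inf_std n ^^ (x - 1)) x)"
    by (metis comp_apply funpow.simps(2))
  then show ?thesis using assms by (simp add: sigma_inf_std_funpow_less sigma_inf_std_def pts_def)
qed

lemma full_cycle_sigma_inf_std: "full_cycle (pts n) (sigma_inf_std n)"
  unfolding full_cycle_def
proof (intro conjI ballI sigma_inf_std_permutes)
  fix x assume x: "x \<in> pts n"
  let ?c = "sigma_inf_std n"
  have "y \<in> {(?c ^^ k) x | k. True}" if y: "y \<in> pts n" for y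
  proof -
    have "2 * n \<in> pts n" using x by (auto simp: pts_def)
    then have "(?c ^^ (2 * n - y)) (2 * n) = y"
      using y by (auto simp: sigma_inf_std_funpow_less pts_def)
    then have "(?c ^^ (2 * n - y + x)) x = y"
      using sigma_inf_std_funpow_self[OF x] by (simp add: funpow_add)
    then show ?thesis by (intro CollectI exI[of _ "2 * n - y + x"]) simp
  qed
  moreover have "(?c ^^ k) x \<in> pts n" for k
    using x permutes_in_image[OF permutes_funpow[OF sigma_inf_std_permutes]] by blast
  ultimately show "pts n = {(?c ^^ k) x | k. True}" by blast
qed

section \<open>Canonical tuples\<close>

text \<open>For parameters \<open>a, b\<close>, \<open>\<sigma>\<^sub>0\<close> reverses each of the blocks \<open>[1, 2a]\<close>, \<open>[2a+1, 2a+2b]\<close>,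
  \<open>[2a+2b+1, 2n]\<close>, and \<open>canon_rho\<close> is the product \<open>\<sigma>\<^sub>1\<tau> = \<sigma>\<^sub>0\<sigma>\<^sub>\<infinity>\<^sup>-\<^sup>1\<close>, which has the 3-cycle
  \<open>(2a, 2a+2b, 2n)\<close>.\<close>

definition canon_blocks :: "nat \<Rightarrow> nat \<Rightarrow> nat \<Rightarrow> (nat \<times> nat) set" where
  "canon_blocks n a b = {(1, 2*a), (2*a+1, 2*a+2*b), (2*a+2*b+1, 2*n)}"

definition canon_sigma0 :: "nat \<Rightarrow> nat \<Rightarrow> nat \<Rightarrow> nat \<Rightarrow> nat" where
  "canon_sigma0 n a b x = (if 1 \<le> x \<and> x \<le> 2*a then 2*a+1-x
     else if 2*a < x \<and> x \<le> 2*a+2*b then 4*a+2*b+1-x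
     else if 2*a+2*b < x \<and> x \<le> 2*n then 2*a+2*b+2*n+1-x else x)"

definition canon_rho :: "nat \<Rightarrow> nat \<Rightarrow> nat \<Rightarrow> nat \<Rightarrow> nat" where
  "canon_rho n a b = canon_sigma0 n a b \<circ> sigma_inf_inv n"

definition canon_tau :: "nat \<Rightarrow> nat \<Rightarrow> nat \<Rightarrow> nat" where
  "canon_tau a b = transpose (2*a) (2*a+2*b)"

definition canon_sigma1 :: "nat \<Rightarrow> nat \<Rightarrow> nat \<Rightarrow> nat \<Rightarrow> nat" where
  "canon_sigma1 n a b = canon_tau a b \<circ> canon_rho n a b"

definition canon_tuple :: "nat \<Rightarrow> nat \<Rightarrow> nat \<Rightarrow> tuple4" where
  "canon_tuple n a b = (canon_sigma0 n a b, sigma_inf_std n, canon_sigma1 n a b, canon_tau a b)"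

locale canon_params =
  fixes n a b :: nat
  assumes a: "1 \<le> a" and b: "1 \<le> b" and ab: "a + b < n"
begin

lemma canon_blocks_bounds:
  assumes "(L, R) \<in> canon_blocks n a b"
  shows "1 \<le> L" "L < R" "R \<le> 2*n" "odd (L + R)" "R \<in> {2*a, 2*a+2*b, 2*n}"
  using assms a b ab by (auto simp: canon_blocks_def)

lemma canon_sigma0_block:
  assumes "(L, R) \<in> canon_blocks n a b" "L \<le> x" "x \<le> R"
  shows "canon_sigma0 n a b x = L + R - x"
  using assms a b ab unfolding canon_blocks_def canon_sigma0_def by auto

lemma pts_covered_by_blocks:
  assumes "x \<in> pts n"
  obtains L R where "(L, R) \<in> canon_blocks n a b" "L \<le> x" "x \<le> R"
proof -
  consider "x \<le> 2*a" | "2*a < x" "x \<le> 2*a+2*b" | "2*a+2*b < x"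
    by linarith
  then show ?thesis using that assms unfolding canon_blocks_def pts_def
    by cases (auto simp del: One_nat_def)
qed

lemma canon_rho_block:
  assumes "(L, R) \<in> canon_blocks n a b" "L \<le> x" "x < R"
  shows "canon_rho n a b x = L + R - Suc x"
proof -
  have "sigma_inf_inv n x = Suc x"
    using canon_blocks_bounds[OF assms(1)] assms(2,3) by (simp add: sigma_inf_inv_def pts_def)
  then show ?thesis using canon_sigma0_block[OF assms(1), of "Suc x"] assms by (simp add: canon_rho_def)
qed

lemma canon_sigma0_invol: "canon_sigma0 n a b (canon_sigma0 n a b x) = x"
proof (cases "x \<in> pts n")
  case True
  then obtain L R where "(L, R) \<in> canon_blocks n a b" "L \<le> x" "x \<le> R"
    by (rule pts_covered_by_blocks)
  then show ?thesis using canon_sigma0_block[of L R] by simp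
next
  case False
  then have "canon_sigma0 n a b x = x" using ab unfolding canon_sigma0_def pts_def by auto
  then show ?thesis by simp
qed

lemma canon_sigma0_fixpoint_free:
  assumes "x \<in> pts n"
  shows "canon_sigma0 n a b x \<noteq> x"
proof -
  obtain L R where LR: "(L, R) \<in> canon_blocks n a b" "L \<le> x" "x \<le> R"
    using assms by (rule pts_covered_by_blocks)
  have "odd (L + R)" using LR(1) by (rule canon_blocks_bounds)
  then have "L + R - x \<noteq> x" by presburger
  then show ?thesis using canon_sigma0_block[OF LR] by simp
qed

lemma canon_sigma0_permutes: "canon_sigma0 n a b permutes pts n"
proof (rule inj_imp_permutes)
  show "inj_on (canon_sigma0 n a b) (pts n)" by (metis canon_sigma0_invol inj_onI)
  show "canon_sigma0 n a b x \<in> pts n" if x: "x \<in> pts n" for x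
  proof -
    obtain L R where LR: "(L, R) \<in> canon_blocks n a b" "L \<le> x" "x \<le> R"
      using x by (rule pts_covered_by_blocks)
    then show ?thesis using canon_sigma0_block[OF LR] canon_blocks_bounds(1-3)[OF LR(1)]
      by (simp add: pts_def) arith
  qed
  show "canon_sigma0 n a b x = x" if "x \<notin> pts n" for x
    using that ab unfolding canon_sigma0_def pts_def by auto
qed simp

lemma canon_sigma0_disj_transp: "disj_transp (pts n) n (canon_sigma0 n a b)"
proof -
  have "moved (canon_sigma0 n a b) (pts n) = pts n"
    using canon_sigma0_fixpoint_free by (auto simp: moved_def)
  then show ?thesis using canon_sigma0_permutes canon_sigma0_invol by (simp add: disj_transp_def)
qed

lemma canon_rho_permutes: "canon_rho n a b permutes pts n"
  unfolding canon_rho_def by (rule permutes_compose[OF sigma_inf_inv_permutes canon_sigma0_permutes])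

lemma canon_rho_3cycle: "has_cycle3 (canon_rho n a b) (2*a) (2*a+2*b) (2*n)"
proof -
  have "sigma_inf_inv n (2*a) = 2*a+1" "sigma_inf_inv n (2*a+2*b) = 2*a+2*b+1"
    "sigma_inf_inv n (2*n) = 1"
    using a b ab by (simp_all add: sigma_inf_inv_def pts_def)
  moreover have "canon_sigma0 n a b (2*a+1) = 2*a+2*b"
    using canon_sigma0_block[of "2*a+1" "2*a+2*b" "2*a+1"] b by (simp add: canon_blocks_def)
  moreover have "canon_sigma0 n a b (2*a+2*b+1) = 2*n"
    using canon_sigma0_block[of "2*a+2*b+1" "2*n" "2*a+2*b+1"] ab by (simp add: canon_blocks_def)
  moreover have "canon_sigma0 n a b 1 = 2*a"
    using canon_sigma0_block[of 1 "2*a" 1] a by (simp add: canon_blocks_def)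
  ultimately show ?thesis using a b ab by (simp add: has_cycle3_def canon_rho_def)
qed

lemma canon_rho_invol:
  assumes "x \<notin> {2*a, 2*a+2*b, 2*n}"
  shows "canon_rho n a b (canon_rho n a b x) = x"
proof (cases "x \<in> pts n")
  case True
  obtain L R where LR: "(L, R) \<in> canon_blocks n a b" "L \<le> x" "x \<le> R"
    using True by (rule pts_covered_by_blocks)
  then have "x < R" using assms canon_blocks_bounds(5)[OF LR(1)] by (metis le_neq_implies_less)
  then show ?thesis using LR canon_rho_block[OF LR(1)] canon_blocks_bounds[OF LR(1)] by simp
next
  case False
  then have "canon_rho n a b x = x"
    using canon_rho_permutes by (simp add: permutes_not_in)
  then show ?thesis by simp
qed

lemma canon_rho_fixed_iff:
  assumes "x \<in> pts n" "x \<notin> {2*a, 2*a+2*b, 2*n}"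
  shows "canon_rho n a b x = x \<longleftrightarrow> x \<in> {a, 2*a+b, a+b+n}"
proof -
  obtain L R where LR: "(L, R) \<in> canon_blocks n a b" "L \<le> x" "x \<le> R"
    using assms(1) by (rule pts_covered_by_blocks)
  then have "x < R" using assms(2) canon_blocks_bounds(5)[OF LR(1)] by (metis le_neq_implies_less)
  then have "canon_rho n a b x = x \<longleftrightarrow> L + R = Suc (2 * x)"
    using LR canon_rho_block[OF LR(1)] by auto
  moreover consider "L = 1" "R = 2*a" | "L = 2*a+1" "R = 2*a+2*b" | "L = 2*a+2*b+1" "R = 2*n"
    using LR(1) by (auto simp: canon_blocks_def)
  then have "L + R = Suc (2 * x) \<longleftrightarrow> x \<in> {a, 2*a+b, a+b+n}"
    using LR(2) \<open>x < R\<close> a b ab by cases auto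
  ultimately show ?thesis by simp
qed

lemma moved_canon_rho: "moved (canon_rho n a b) (pts n) = pts n - {a, 2*a+b, a+b+n}"
proof (intro set_eqI)
  fix x
  show "x \<in> moved (canon_rho n a b) (pts n) \<longleftrightarrow> x \<in> pts n - {a, 2*a+b, a+b+n}"
  proof (cases "x \<in> {2*a, 2*a+2*b, 2*n}")
    case True
    then have "canon_rho n a b x \<noteq> x" using canon_rho_3cycle by (auto simp: has_cycle3_def)
    moreover have "x \<in> pts n" "x \<notin> {a, 2*a+b, a+b+n}" using True a b ab by (auto simp: pts_def)
    ultimately show ?thesis by (simp add: moved_def)
  next
    case False
    then show ?thesis using canon_rho_fixed_iff[of x] by (auto simp: moved_def)
  qed
qed

lemma canon_tau_transp: "is_transp (pts n) (canon_tau a b)"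
  unfolding is_transp_def canon_tau_def using a b ab
  by (intro bexI[of _ "2*a"] bexI[of _ "2*a+2*b"]) (auto simp: pts_def)

lemma canon_sigma1_disj_transp: "disj_transp (pts n) (n - 2) (canon_sigma1 n a b)"
proof -
  note tau_rho = transpose_comp_3cycle[OF canon_rho_3cycle, folded canon_tau_def canon_sigma1_def]
  have "canon_tau a b permutes pts n"
    using canon_tau_transp by (auto simp: is_transp_def permutes_swap_id)
  then have "canon_sigma1 n a b permutes pts n"
    unfolding canon_sigma1_def by (rule permutes_compose[OF canon_rho_permutes])
  moreover have "\<forall>x. canon_sigma1 n a b (canon_sigma1 n a b x) = x"
    using tau_rho(1) canon_rho_invol by blast
  moreover have "card (moved (canon_sigma1 n a b) (pts n)) = 2 * (n - 2)"
  proof -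
    have "moved (canon_sigma1 n a b) (pts n) = pts n - {a, 2*a, 2*a+b, a+b+n}"
      using tau_rho(2) canon_rho_invol by (auto simp: moved_canon_rho)
    moreover have "{a, 2*a, 2*a+b, a+b+n} \<subseteq> pts n" "card {a, 2*a, 2*a+b, a+b+n} = 4"
      using a b ab by (auto simp: pts_def)
    ultimately show ?thesis by (simp add: card_Diff_subset)
  qed
  ultimately show ?thesis by (simp add: disj_transp_def)
qed

lemma canon_tau_sigma1: "canon_tau a b \<circ> canon_sigma1 n a b = canon_rho n a b"
  by (simp add: canon_sigma1_def canon_tau_def flip: comp_assoc)

lemma canon_tuple_admissible: "admissible n (canon_tuple n a b)"
proof -
  have "canon_tau a b \<circ> canon_sigma1 n a b \<circ> sigma_inf_std n \<circ> canon_sigma0 n a b = id"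
    by (simp add: canon_tau_sigma1 canon_rho_def fun_eq_iff canon_sigma0_invol)
  then show ?thesis
    using canon_sigma0_disj_transp full_cycle_sigma_inf_std canon_sigma1_disj_transp canon_tau_transp
    by (simp add: admissible_def canon_tuple_def)
qed

lemma canon_tuple_transp_and_3cycle:
  "transp_and_3cycle (pts n) (n - 3) (canon_tau a b \<circ> canon_sigma1 n a b)"
proof -
  have "{a, 2*a+b, a+b+n} \<subseteq> pts n" "card {a, 2*a+b, a+b+n} = 3"
    using a b ab by (auto simp: pts_def)
  then have "card (moved (canon_rho n a b) (pts n)) = 2 * (n - 3) + 3"
    using a b ab by (simp add: moved_canon_rho card_Diff_subset)
  then show ?thesis unfolding canon_tau_sigma1 transp_and_3cycle_def
    using canon_rho_permutes canon_rho_3cycle canon_rho_invol by blast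
qed

end

section \<open>Recognising the canonical involution\<close>

text \<open>If \<open>\<rho> x = s (x + 1)\<close> on \<open>[L, R)\<close> and \<open>\<rho>\<close> is an involution except on a \<open>\<rho>\<close>-stable set meeting
  \<open>[L, R)\<close> at most once, then the chord \<open>u \<leftrightarrow> v\<close> of the involution \<open>s\<close> forces the nested chords
  \<open>u + 1 \<leftrightarrow> v - 1\<close>, \<open>u + 2 \<leftrightarrow> v - 2\<close>, \<dots>: \<open>s\<close> reverses \<open>[u, v]\<close>.\<close>

lemma involution_reverses_interval:
  fixes s \<rho> :: "nat \<Rightarrow> nat" and C :: "nat set"
  assumes inv: "\<forall>x. s (s x) = x"
    and rho: "\<forall>x. L \<le> x \<and> x < R \<longrightarrow> \<rho> x = s (x + 1)"
    and invol: "\<forall>v. v \<notin> C \<longrightarrow> \<rho> (\<rho> v) = v"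
    and closed: "\<forall>v. v \<in> C \<longrightarrow> \<rho> v \<in> C"
    and one: "\<forall>x y. L \<le> x \<and> x < R \<and> L \<le> y \<and> y < R \<and> x \<in> C \<and> y \<in> C \<longrightarrow> x = y"
    and fpf: "\<forall>x. L \<le> x \<and> x \<le> R \<longrightarrow> s x \<noteq> x"
  shows "L \<le> u \<Longrightarrow> u < v \<Longrightarrow> v \<le> R \<Longrightarrow> s u = v \<Longrightarrow> u \<le> i \<Longrightarrow> i \<le> v \<Longrightarrow> s i = u + v - i"
proof (induction "v - u" arbitrary: u v i rule: less_induct)
  case less
  show ?case
  proof (cases "v = u + 1")
    case True
    then have "i = u \<or> i = v" using less.prems by auto
    then show ?thesis using less.prems inv by auto
  next
    case False
    then have uv: "u + 1 < v" using less.prems by auto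
    have "L \<le> v - 1" "v - 1 < R" "v - 1 + 1 = v" using less.prems uv by auto
    then have r1: "\<rho> (v - 1) = u" using rho less.prems inv by metis
    have r2: "\<rho> u = v - 1"
    proof (cases "v - 1 \<in> C")
      case True
      then have "u \<in> C" using closed r1 by metis
      moreover have "L \<le> v - 1" "v - 1 < R" "u < R" using less.prems uv by auto
      ultimately have "u = v - 1" using one True less.prems by blast
      then show ?thesis using uv by simp
    next
      case False
      then show ?thesis using invol r1 by metis
    qed
    have s1: "s (u + 1) = v - 1" using r2 rho less.prems uv by auto
    have "u + 1 \<noteq> v - 1" using fpf s1 less.prems uv by force
    then have uv2: "u + 1 < v - 1" using uv by auto
    have IH: "s j = (u + 1) + (v - 1) - j" if j: "u + 1 \<le> j" "j \<le> v - 1" for j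
      by (rule less.hyps) (use less.prems uv2 s1 j in auto)
    show ?thesis
    proof (cases "i = u \<or> i = v")
      case True then show ?thesis using less.prems inv by auto
    next
      case False then show ?thesis using IH[of i] less.prems uv2 by auto
    qed
  qed
qed

lemma reversal_fixpoint_free_odd:
  fixes s :: "nat \<Rightarrow> nat"
  assumes "\<forall>i. L \<le> i \<and> i \<le> R \<longrightarrow> s i = L + R - i" "\<forall>i. L \<le> i \<and> i \<le> R \<longrightarrow> s i \<noteq> i" "L \<le> R"
  shows "odd (L + R)"
proof
  assume "even (L + R)"
  then obtain k where k: "L + R = 2 * k" by blast
  then have "L \<le> k" "k \<le> R" using assms(3) by linarith+
  then show False using assms(1,2)[rule_format, of k] k by simp
qed

lemma involution_three_blocks:
  assumes n: "1 \<le> n"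
    and inv: "\<forall>x. s (s x) = x" and perm: "s permutes pts n" and fpf: "\<forall>x\<in>pts n. s x \<noteq> x"
    and cyc: "has_cycle3 (s \<circ> sigma_inf_inv n) (2*n) q r"
    and oth: "\<forall>v. v \<notin> {2*n, q, r} \<longrightarrow> (s \<circ> sigma_inf_inv n) ((s \<circ> sigma_inf_inv n) v) = v"
  shows "1 < q" "q + 1 < r" "r + 1 < 2*n"
    and "\<forall>i. 1 \<le> i \<and> i \<le> q \<longrightarrow> s i = 1 + q - i"
    and "\<forall>i. q + 1 \<le> i \<and> i \<le> r \<longrightarrow> s i = (q + 1) + r - i"
    and "\<forall>i. r + 1 \<le> i \<and> i \<le> 2*n \<longrightarrow> s i = (r + 1) + 2*n - i"
proof -
  define \<rho> where "\<rho> = s \<circ> sigma_inf_inv n"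
  have rho: "\<rho> x = s (x + 1)" if "1 \<le> x" "x < 2*n" for x
    using that by (simp add: \<rho>_def sigma_inf_inv_def pts_def)
  have \<rho>qr: "\<rho> (2*n) = q" "\<rho> q = r" "\<rho> r = 2*n" "2*n \<noteq> q" "q \<noteq> r" "2*n \<noteq> r"
    using cyc by (auto simp: has_cycle3_def \<rho>_def)
  have fpf': "s x \<noteq> x" if "1 \<le> x" "x \<le> 2*n" for x
    using fpf that by (simp add: pts_def)
  have reverse: "s i = L + R - i"
    if "1 \<le> L" "L < R" "R \<le> 2*n" "s L = R" "q \<notin> {L..<R}" "L \<le> i" "i \<le> R" for L R i
  proof (rule involution_reverses_interval[of s L R \<rho> "{2*n, q, r}"])
    show "\<forall>x. L \<le> x \<and> x < R \<longrightarrow> \<rho> x = s (x + 1)" using rho that by auto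
    show "\<forall>v. v \<notin> {2*n, q, r} \<longrightarrow> \<rho> (\<rho> v) = v" using oth by (simp add: \<rho>_def)
    show "\<forall>v. v \<in> {2*n, q, r} \<longrightarrow> \<rho> v \<in> {2*n, q, r}" using \<rho>qr by auto
    show "\<forall>x y. L \<le> x \<and> x < R \<and> L \<le> y \<and> y < R \<and> x \<in> {2*n, q, r} \<and> y \<in> {2*n, q, r} \<longrightarrow> x = y"
      using that by auto
    show "\<forall>x. L \<le> x \<and> x \<le> R \<longrightarrow> s x \<noteq> x" using fpf' that by auto
  qed (use inv that in auto)
  have q1: "s 1 = q" using \<rho>qr(1) n by (simp add: \<rho>_def sigma_inf_inv_def pts_def)
  moreover have "1 \<in> pts n" using n by (simp add: pts_def)
  ultimately have "q \<in> pts n" "q \<noteq> 1" using perm fpf by (auto simp: permutes_in_image)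
  then show q: "1 < q" using \<rho>qr by (auto simp: pts_def)
  have "q < 2*n" using \<open>q \<in> pts n\<close> \<rho>qr by (auto simp: pts_def)
  show P1: "\<forall>i. 1 \<le> i \<and> i \<le> q \<longrightarrow> s i = 1 + q - i"
    using reverse[of 1 q] q \<open>q < 2*n\<close> q1 by auto
  have r1: "s (q + 1) = r" using \<rho>qr rho q \<open>q < 2*n\<close> by simp
  moreover have "q + 1 \<in> pts n" using \<open>q < 2*n\<close> by (simp add: pts_def)
  ultimately have "r \<in> pts n" "s r = q + 1" using perm inv by (auto simp: permutes_in_image)
  moreover have "\<not> r \<le> q" using P1 \<open>s r = q + 1\<close> \<open>r \<in> pts n\<close> by (auto simp: pts_def)
  moreover have "r \<noteq> q + 1" using r1 fpf' q \<open>q < 2*n\<close> by auto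
  ultimately have r: "q + 1 < r" "r < 2*n" using \<rho>qr by (auto simp: pts_def)
  then show "q + 1 < r" by simp
  show "\<forall>i. q + 1 \<le> i \<and> i \<le> r \<longrightarrow> s i = (q + 1) + r - i"
    using reverse[of "q + 1" r] r r1 by auto
  have t1: "s (r + 1) = 2*n" using \<rho>qr rho r by simp
  then show t: "r + 1 < 2*n" using fpf' r(2) by (metis Suc_eq_plus1 Suc_leI le_add2 le_neq_implies_less)
  show "\<forall>i. r + 1 \<le> i \<and> i \<le> 2*n \<longrightarrow> s i = (r + 1) + 2*n - i"
    using reverse[of "r + 1" "2*n"] t t1 r by auto
qed

lemma fixpoint_free_involution_eq_canon_sigma0:
  assumes n: "1 \<le> n"
    and inv: "\<forall>x. s (s x) = x" and perm: "s permutes pts n" and fpf: "\<forall>x\<in>pts n. s x \<noteq> x"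
    and cyc: "has_cycle3 (s \<circ> sigma_inf_inv n) (2*n) q r"
    and oth: "\<forall>v. v \<notin> {2*n, q, r} \<longrightarrow> (s \<circ> sigma_inf_inv n) ((s \<circ> sigma_inf_inv n) v) = v"
  shows "\<exists>a b. canon_params n a b \<and> q = 2*a \<and> r = 2*a+2*b \<and> s = canon_sigma0 n a b"
proof -
  note blocks = involution_three_blocks[OF assms]
  have fpf': "\<forall>i. L \<le> i \<and> i \<le> R \<longrightarrow> s i \<noteq> i" if "1 \<le> L" "R \<le> 2*n" for L R
    using fpf that by (auto simp: pts_def)
  have "odd (1 + q)"
    by (rule reversal_fixpoint_free_odd[OF blocks(4) fpf']) (use blocks in auto)
  moreover have "odd (q + 1 + r)"
    by (rule reversal_fixpoint_free_odd[OF blocks(5) fpf']) (use blocks in auto)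
  ultimately have "even q" "even r" by simp_all
  then obtain a c where ac: "q = 2*a" "r = 2*c" by (auto elim!: evenE)
  define b where "b = c - a"
  have qr: "q = 2*a" "r = 2*a+2*b" using ac blocks(2) by (simp_all add: b_def)
  interpret canon_params n a b using qr blocks(1-3) by unfold_locales auto
  have "s x = canon_sigma0 n a b x" for x
  proof (cases "x \<in> pts n")
    case True
    then obtain L R where LR: "(L, R) \<in> canon_blocks n a b" "L \<le> x" "x \<le> R"
      by (rule pts_covered_by_blocks)
    moreover have "(L, R) = (1, q) \<or> (L, R) = (q + 1, r) \<or> (L, R) = (r + 1, 2*n)"
      using LR(1) unfolding qr by (simp add: canon_blocks_def)
    ultimately have "s x = L + R - x" using blocks(4-6) by auto
    then show ?thesis using canon_sigma0_block[OF LR] by simp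
  next
    case False
    then show ?thesis using perm canon_sigma0_permutes by (simp add: permutes_not_in)
  qed
  then show ?thesis using qr canon_params_axioms by blast
qed

section \<open>Special tuples in a conjugacy class\<close>

lemma special_conj4_iff:
  assumes sp: "special n (s0, sigma_inf_std n, s1, t)" and g: "g permutes pts n"
  shows "special n (conj4 g (s0, sigma_inf_std n, s1, t)) \<longleftrightarrow>
    g \<circ> sigma_inf_std n = sigma_inf_std n \<circ> g \<and>
    s1 (inv g (2 * n)) = inv g (2 * n) \<and> t (inv g (2 * n)) = inv g (2 * n)"
proof -
  have "admissible n (conj4 g (s0, sigma_inf_std n, s1, t))"
    using sp g admissible_conj4 by (simp add: special_def)
  moreover have "g (f (inv g (2 * n))) = 2 * n \<longleftrightarrow> f (inv g (2 * n)) = inv g (2 * n)" for f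
    using g by (metis permutes_inverses)
  ultimately show ?thesis using conj_eq_self_iff[OF g] by (simp add: special_def conj4_def)
qed

lemma sigma_inf_std_funpow_commute: "(sigma_inf_std n ^^ k) \<circ> sigma_inf_std n = sigma_inf_std n \<circ> (sigma_inf_std n ^^ k)"
  by (simp add: fun_eq_iff funpow_swap1)

text \<open>A conjugator fixing \<open>\<sigma>\<^sub>\<infinity>\<close> is the rotation \<open>\<sigma>\<^sub>\<infinity>\<^sup>y\<close> determined by the point \<open>y\<close> it sends to \<open>2n\<close>.\<close>

lemma special_conj_class_eq_image:
  assumes n: "1 \<le> n" and sp: "special n (s0, sigma_inf_std n, s1, t)"
  defines "T \<equiv> (s0, sigma_inf_std n, s1, t)"
  shows "{T' \<in> conj_class n T. special n T'} =
    (\<lambda>y. conj4 (sigma_inf_std n ^^ y) T) ` {y \<in> pts n. s1 y = y \<and> t y = y}"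
proof (intro set_eqI iffI)
  let ?c = "sigma_inf_std n"
  fix T' assume "T' \<in> {T' \<in> conj_class n T. special n T'}"
  then obtain g where g: "g permutes pts n" "T' = conj4 g T" "special n T'"
    by (auto simp: conj_class_def)
  define y where "y = inv g (2 * n)"
  have "2 * n \<in> pts n" using n by (simp add: pts_def)
  then have "y \<in> pts n" using g(1) by (simp add: y_def permutes_in_image permutes_inv)
  moreover have "g \<circ> ?c = ?c \<circ> g" "s1 y = y" "t y = y"
    using g special_conj4_iff[OF sp g(1)] by (simp_all add: T_def y_def)
  moreover have "g = ?c ^^ y"
  proof (rule full_cycle_commuting_eqI[OF full_cycle_sigma_inf_std g(1)])
    show "(?c ^^ y) permutes pts n" by (rule permutes_funpow[OF sigma_inf_std_permutes])
    show "g y = (?c ^^ y) y"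
      using g(1) \<open>y \<in> pts n\<close> by (simp add: y_def sigma_inf_std_funpow_self permutes_inverses)
  qed (use \<open>g \<circ> ?c = ?c \<circ> g\<close> \<open>y \<in> pts n\<close> sigma_inf_std_funpow_commute in auto)
  ultimately show "T' \<in> (\<lambda>y. conj4 (?c ^^ y) T) ` {y \<in> pts n. s1 y = y \<and> t y = y}"
    using g(2) by blast
next
  let ?c = "sigma_inf_std n"
  fix T' assume "T' \<in> (\<lambda>y. conj4 (?c ^^ y) T) ` {y \<in> pts n. s1 y = y \<and> t y = y}"
  then obtain y where y: "y \<in> pts n" "s1 y = y" "t y = y" "T' = conj4 (?c ^^ y) T" by blast
  have g: "(?c ^^ y) permutes pts n" by (rule permutes_funpow[OF sigma_inf_std_permutes])
  have "inv (?c ^^ y) (2 * n) = y"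
    using g y(1) by (simp add: sigma_inf_std_funpow_self permutes_inv_eq)
  then have "special n T'"
    using special_conj4_iff[OF sp g] y sigma_inf_std_funpow_commute by (simp add: T_def)
  then show "T' \<in> {T' \<in> conj_class n T. special n T'}"
    using g y(4) by (auto simp: conj_class_def)
qed

text \<open>Distinct rotations give distinct conjugates: the point \<open>x\<close> is recovered from a conjugate as its
  unique point fixed by the conjugated \<open>\<sigma>\<^sub>1\<close> and moved by the conjugated \<open>\<tau>\<close>.\<close>

lemma rotation_conj4_inj:
  assumes x: "x \<in> pts n" "s1 x = x" "x \<noteq> z" "s1 z \<noteq> z"
  shows "inj_on (\<lambda>y. conj4 (sigma_inf_std n ^^ y) (s0, sigma_inf_std n, s1, transpose x z)) (pts n)"
proof (rule inj_onI)
  let ?c = "sigma_inf_std n"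
  fix y y' assume yy: "y \<in> pts n" "y' \<in> pts n"
    and eq: "conj4 (?c ^^ y) (s0, ?c, s1, transpose x z) = conj4 (?c ^^ y') (s0, ?c, s1, transpose x z)"
  define A where "A = ?c ^^ y"
  define B where "B = ?c ^^ y'"
  have A: "A permutes pts n" "A \<circ> ?c = ?c \<circ> A" and B: "B permutes pts n" "B \<circ> ?c = ?c \<circ> B"
    by (simp_all add: A_def B_def permutes_funpow[OF sigma_inf_std_permutes] sigma_inf_std_funpow_commute)
  have s1: "A \<circ> s1 \<circ> inv A = B \<circ> s1 \<circ> inv B" and t: "A \<circ> transpose x z \<circ> inv A = B \<circ> transpose x z \<circ> inv B"
    using eq by (simp_all add: conj4_def A_def B_def)
  have injA: "inj A" using A(1) by (rule permutes_inj)
  have "(A \<circ> s1 \<circ> inv A) (A x) = A x" using A(1) x(2) by (simp add: permutes_inverses)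
  then have "B (s1 (inv B (A x))) = A x" using s1 by simp
  then have fixed: "s1 (inv B (A x)) = inv B (A x)" using B(1) by (metis permutes_inverses(2))
  have "(A \<circ> transpose x z \<circ> inv A) (A x) \<noteq> A x"
    using A(1) x(3) injA by (simp add: permutes_inverses inj_eq)
  then have "B (transpose x z (inv B (A x))) \<noteq> A x" using t by simp
  then have "transpose x z (inv B (A x)) \<noteq> inv B (A x)" using B(1) by (metis permutes_inverses(1))
  then have "inv B (A x) = x" using fixed x(4) by (metis transpose_apply_other)
  then have "A x = B x" using B(1) by (metis permutes_inverses(1))
  then have "A = B"
    by (rule full_cycle_commuting_eqI[OF full_cycle_sigma_inf_std A(1) B(1) A(2) B(2) x(1)])
  moreover have "A y = 2 * n" "B y' = 2 * n" using yy by (simp_all add: A_def B_def sigma_inf_std_funpow_self)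
  ultimately have "A y = A y'" by simp
  then show "y = y'" using injA by (simp add: inj_eq)
qed

lemma card_special_in_conj_class:
  assumes sp: "special n (s0, sinf, s1, t)" and cyc: "has_cycle3 (t \<circ> s1) p q r"
  shows "card {T' \<in> conj_class n (s0, sinf, s1, t). special n T'} = 3"
proof -
  have sinf: "sinf = sigma_inf_std n" and s1: "disj_transp (pts n) (n - 2) s1"
    and t: "is_transp (pts n) t"
    using sp by (auto simp: special_def admissible_def)
  obtain x z where xz: "x \<in> pts n" "x \<noteq> z" "t = transpose x z" "s1 x = x" "s1 z \<noteq> z"
    using transpose_comp_invol_3cycle_points[OF _ t cyc] s1 by (metis disj_transp_def)
  have "z \<in> pts n" using xz(5) s1 by (metis disj_transp_def permutes_not_in)
  then have "z \<in> moved s1 (pts n)" using xz(5) by (simp add: moved_def)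
  then have "card (moved s1 (pts n)) \<noteq> 0" by (auto simp: moved_def)
  then have n: "n \<ge> 3" using s1 by (simp add: disj_transp_def)
  have "{y \<in> pts n. s1 y = y} = pts n - moved s1 (pts n)" by (auto simp: moved_def)
  then have "card {y \<in> pts n. s1 y = y} = 4"
    using s1 n by (simp add: card_Diff_subset disj_transp_def moved_def finite_subset)
  moreover have "{y \<in> pts n. s1 y = y \<and> t y = y} = {y \<in> pts n. s1 y = y} - {x}"
    using xz by (auto simp: transpose_def)
  ultimately have F: "card {y \<in> pts n. s1 y = y \<and> t y = y} = 3" using xz by simp
  have "inj_on (\<lambda>y. conj4 (sigma_inf_std n ^^ y) (s0, sigma_inf_std n, s1, t)) {y \<in> pts n. s1 y = y \<and> t y = y}"
    using rotation_conj4_inj[OF xz(1,4,2,5)] xz(3) by (auto intro: inj_on_subset)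
  then show ?thesis
    using special_conj_class_eq_image[of n s0 s1 t] n sp F by (simp add: sinf card_image)
qed

section \<open>Classification of the conjugacy classes\<close>

lemma admissible_std_eq_canon_tuple:
  assumes adm: "admissible n (s0, sigma_inf_std n, s1, transpose x y)"
    and cyc: "has_cycle3 (transpose x y \<circ> s1) (2*n) x y"
    and oth: "\<forall>v. v \<notin> {2*n, x, y} \<longrightarrow> (transpose x y \<circ> s1) ((transpose x y \<circ> s1) v) = v"
  shows "\<exists>a b. canon_params n a b \<and> (s0, sigma_inf_std n, s1, transpose x y) = canon_tuple n a b"
proof -
  have s0: "disj_transp (pts n) n s0" and t: "is_transp (pts n) (transpose x y)"
    and eq: "transpose x y \<circ> s1 \<circ> sigma_inf_std n \<circ> s0 = id"
    using adm by (simp_all add: admissible_def)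
  have "n \<ge> 1" using t by (auto simp: is_transp_def pts_def)
  have rho: "transpose x y \<circ> s1 = s0 \<circ> sigma_inf_inv n"
  proof
    fix v
    have "(transpose x y \<circ> s1 \<circ> sigma_inf_std n \<circ> s0) (s0 (sigma_inf_inv n v)) = s0 (sigma_inf_inv n v)"
      using eq by simp
    then show "(transpose x y \<circ> s1) v = (s0 \<circ> sigma_inf_inv n) v"
      using s0 by (simp add: disj_transp_def)
  qed
  have "moved s0 (pts n) = pts n"
    using s0 by (intro card_subset_eq) (auto simp: disj_transp_def moved_def)
  then have "\<forall>v\<in>pts n. s0 v \<noteq> v" by (auto simp: moved_def)
  then obtain a b where ab: "canon_params n a b" "x = 2*a" "y = 2*a+2*b" "s0 = canon_sigma0 n a b"
    using fixpoint_free_involution_eq_canon_sigma0[OF \<open>n \<ge> 1\<close>] s0 cyc oth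
    unfolding rho disj_transp_def by blast
  have "s1 = transpose x y \<circ> (transpose x y \<circ> s1)" by (simp add: fun_eq_iff)
  also have "\<dots> = canon_sigma1 n a b"
    unfolding rho by (simp add: ab canon_sigma1_def canon_rho_def canon_tau_def)
  finally have "s1 = canon_sigma1 n a b" .
  then show ?thesis using ab by (auto simp: canon_tuple_def canon_tau_def)
qed

lemma conj_class_eq_canon:
  assumes adm: "admissible n T"
    and tc: "case T of (a0, ainf, a1, at) \<Rightarrow> transp_and_3cycle (pts n) (n - 3) (at \<circ> a1)"
  shows "\<exists>a b. canon_params n a b \<and> conj_class n T = conj_class n (canon_tuple n a b)"
proof -
  obtain s0 \<sigma> s1 t where T: "T = (s0, \<sigma>, s1, t)" by (cases T)
  have s1: "disj_transp (pts n) (n - 2) s1" and t: "is_transp (pts n) t"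
    and \<sigma>: "full_cycle (pts n) \<sigma>" using adm by (simp_all add: admissible_def T)
  obtain p q r where "has_cycle3 (t \<circ> s1) p q r" and oth: "\<forall>v. v \<notin> {p, q, r} \<longrightarrow> (t \<circ> s1) ((t \<circ> s1) v) = v"
    using tc by (auto simp: T transp_and_3cycle_def)
  moreover obtain x y where xy: "y \<in> pts n" "t = transpose x y" "has_cycle3 (t \<circ> s1) (s1 y) x y"
    using transpose_comp_invol_3cycle_points[OF _ t] s1 calculation(1) by (metis disj_transp_def)
  ultimately have oth: "\<forall>v. v \<notin> {s1 y, x, y} \<longrightarrow> (t \<circ> s1) ((t \<circ> s1) v) = v"
    using has_cycle3_unique by metis
  have "s1 y \<in> pts n" using xy(1) s1 by (simp add: disj_transp_def permutes_in_image)
  moreover have "2 * n \<in> pts n" using xy(1) by (auto simp: pts_def)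
  ultimately obtain g where g: "g permutes pts n" "g \<circ> \<sigma> = sigma_inf_std n \<circ> g" "g (s1 y) = 2 * n"
    using full_cycles_conjugate[OF \<sigma> full_cycle_sigma_inf_std] by (metis finite_pts)
  have "g \<circ> \<sigma> \<circ> inv g = sigma_inf_std n" using g by (simp add: comp_assoc permutes_inv_o)
  then have gT: "conj4 g T = (g \<circ> s0 \<circ> inv g, sigma_inf_std n, g \<circ> s1 \<circ> inv g, transpose (g x) (g y))"
    using conj_transpose[OF g(1)] by (simp add: conj4_def T xy)
  have rho: "transpose (g x) (g y) \<circ> (g \<circ> s1 \<circ> inv g) = g \<circ> (t \<circ> s1) \<circ> inv g"
    using conj_comp[OF g(1)] conj_transpose[OF g(1)] xy(2) by metis
  note cyc' = has_cycle3_conj[OF g(1) xy(3) oth, unfolded g(3)]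
  have "\<exists>a b. canon_params n a b \<and> conj4 g T = canon_tuple n a b"
    unfolding gT
  proof (rule admissible_std_eq_canon_tuple)
    show "admissible n (g \<circ> s0 \<circ> inv g, sigma_inf_std n, g \<circ> s1 \<circ> inv g, transpose (g x) (g y))"
      using admissible_conj4[OF g(1) adm] gT by simp
  qed (unfold rho, fact cyc'(1), fact cyc'(2))
  then show ?thesis using conj_class_conj4[OF g(1)] by metis
qed

text \<open>A conjugation between canonical tuples commutes with \<open>\<sigma>\<^sub>\<infinity>\<close> and fixes \<open>2n\<close>, the only point of
  the 3-cycle of \<open>\<sigma>\<^sub>1 \<tau>\<close> not moved by \<open>\<tau>\<close>; hence it is the identity.\<close>

lemma canon_tuple_conj_class_inj:
  assumes p: "canon_params n a b" and p': "canon_params n a' b'"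
    and eq: "conj_class n (canon_tuple n a b) = conj_class n (canon_tuple n a' b')"
  shows "a = a' \<and> b = b'"
proof -
  interpret P: canon_params n a b by (rule p)
  interpret P': canon_params n a' b' by (rule p')
  have "canon_tuple n a' b' \<in> conj_class n (canon_tuple n a b)" using eq self_in_conj_class by blast
  then obtain g where g: "g permutes pts n" "canon_tuple n a' b' = conj4 g (canon_tuple n a b)"
    by (auto simp: conj_class_def)
  have c: "g \<circ> sigma_inf_std n \<circ> inv g = sigma_inf_std n"
    and tau: "canon_tau a' b' = g \<circ> canon_tau a b \<circ> inv g"
    and "canon_sigma1 n a' b' = g \<circ> canon_sigma1 n a b \<circ> inv g"
    using g(2) by (simp_all add: canon_tuple_def conj4_def)
  then have rho: "canon_rho n a' b' = g \<circ> canon_rho n a b \<circ> inv g"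
    using P.canon_tau_sigma1 P'.canon_tau_sigma1 conj_comp[OF g(1)] by metis
  define v where "v = inv g (2 * n)"
  have gv: "g v = 2 * n" using g(1) by (simp add: v_def permutes_inverses)
  have "g (canon_rho n a b (canon_rho n a b v)) = canon_rho n a' b' (canon_rho n a' b' (2 * n))"
    using g(1) by (simp add: rho v_def permutes_inverses)
  also have "\<dots> \<noteq> 2 * n" using P'.canon_rho_3cycle by (simp add: has_cycle3_def)
  finally have "canon_rho n a b (canon_rho n a b v) \<noteq> v" using gv by metis
  then have v: "v \<in> {2*a, 2*a+2*b, 2*n}" using P.canon_rho_invol by blast
  have "g (canon_tau a b v) = canon_tau a' b' (2 * n)"
    using g(1) by (simp add: tau v_def permutes_inverses)
  also have "\<dots> = g v" using gv P'.a P'.b P'.ab by (simp add: canon_tau_def)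
  finally have "canon_tau a b v = v" using g(1) by (metis permutes_inj inj_eq)
  with v have "v = 2 * n" using P.a P.b P.ab by (auto simp: canon_tau_def)
  then have "g (2 * n) = id (2 * n)" using gv by simp
  moreover have "2 * n \<in> pts n" using P.ab by (simp add: pts_def)
  moreover have "g \<circ> sigma_inf_std n = sigma_inf_std n \<circ> g" using c conj_eq_self_iff[OF g(1)] by blast
  ultimately have "g = id"
    using full_cycle_commuting_eqI[OF full_cycle_sigma_inf_std g(1) permutes_id] by simp
  then have rho_eq: "canon_rho n a' b' = canon_rho n a b" by (simp add: rho)
  have "canon_rho n a b (2*n) = 2*a" "canon_rho n a' b' (2*n) = 2*a'"
    "canon_rho n a b (2*a) = 2*a+2*b" "canon_rho n a' b' (2*a') = 2*a'+2*b'"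
    using P.canon_rho_3cycle P'.canon_rho_3cycle by (simp_all add: has_cycle3_def)
  then show ?thesis unfolding rho_eq by simp
qed

lemma card_pairs_sum_less: "2 * card {(a, b). 1 \<le> a \<and> 1 \<le> b \<and> a + b < (n::nat)} = (n - 1) * (n - 2)"
proof (induction n)
  case 0 then show ?case by simp
next
  case (Suc n)
  define P where "P m = {(a, b). 1 \<le> a \<and> 1 \<le> b \<and> a + b < (m::nat)}" for m
  have fin: "finite (P m)" for m
    by (rule finite_subset[of _ "{0..m} \<times> {0..m}"]) (auto simp: P_def)
  have split: "P (Suc n) = P n \<union> (\<lambda>a. (a, n - a)) ` {1..<n}"
    by (auto simp: P_def image_def)
  have disj: "P n \<inter> (\<lambda>a. (a, n - a)) ` {1..<n} = {}" by (auto simp: P_def)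
  have "card ((\<lambda>a. (a, n - a)) ` {1..<n}) = n - 1"
    by (subst card_image) (auto simp: inj_on_def)
  then have "card (P (Suc n)) = card (P n) + (n - 1)"
    unfolding split using fin disj by (simp add: card_Un_disjoint)
  then have "2 * card (P (Suc n)) = (n - 1) * (n - 2) + 2 * (n - 1)"
    using Suc.IH by (simp add: P_def)
  also have "\<dots> = (Suc n - 1) * (Suc n - 2)"
    by (cases n; cases "n - 1") (auto simp: algebra_simps)
  finally show ?case by (simp add: P_def)
qed

lemma card_conj_classes_transp_and_3cycle:
  "card (conj_class n ` {T. admissible n T \<and>
      (case T of (a0, ainf, a1, at) \<Rightarrow> transp_and_3cycle (pts n) (n - 3) (at \<circ> a1))})
    = (n - 1) * (n - 2) div 2"
proof -
  define A where "A = {T. admissible n T \<and>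
      (case T of (a0, ainf, a1, at) \<Rightarrow> transp_and_3cycle (pts n) (n - 3) (at \<circ> a1))}"
  define P where "P = {(a, b). canon_params n a b}"
  define F where "F = (\<lambda>(a, b). conj_class n (canon_tuple n a b))"
  have "conj_class n ` A \<subseteq> F ` P"
    using conj_class_eq_canon by (fastforce simp: A_def P_def F_def)
  moreover have "F ` P \<subseteq> conj_class n ` A"
  proof
    fix C assume "C \<in> F ` P"
    then obtain a b where "canon_params n a b" "C = conj_class n (canon_tuple n a b)"
      by (auto simp: F_def P_def)
    then show "C \<in> conj_class n ` A"
      using canon_params.canon_tuple_admissible canon_params.canon_tuple_transp_and_3cycle
      by (fastforce simp: A_def canon_tuple_def)
  qed
  moreover have "inj_on F P"
    using canon_tuple_conj_class_inj by (fastforce simp: inj_on_def F_def P_def)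
  ultimately have "card (conj_class n ` A) = card P" by (simp add: card_image subset_antisym)
  moreover have "2 * card P = (n - 1) * (n - 2)"
    using card_pairs_sum_less[of n] by (simp add: P_def canon_params_def)
  ultimately show ?thesis by (simp add: A_def)
qed

theorem mainTheorem15:
  fixes n :: nat
  assumes "n \<ge> 1"
  shows "(\<forall>s0 sinf s1 t. special n (s0, sinf, s1, t) \<and>
            (\<exists>h k. has_cycle3 (t \<circ> s1) (2 * n - h) h k) \<longrightarrow>
            card {T' \<in> conj_class n (s0, sinf, s1, t). special n T'} = 3)
    \<and> card (conj_class n ` {T. admissible n T \<and>
              (case T of (a0, ainf, a1, at) \<Rightarrow> transp_and_3cycle (pts n) (n - 3) (at \<circ> a1))})
        = (n - 1) * (n - 2) div 2"
  using card_special_in_conj_class card_conj_classes_transp_and_3cycle by blast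

end
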